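(* In the changepoint model of the context, for all $0<i\le n$ and $0\le j\le i$, $$c_{ji}=\frac{o_{ji}}{Z_i}\,q_{ji}\,c_{j,i-1}\ \ (j<i),\qquad c_{ii}=\frac{o_{ii}}{Z_i}\Big(1-\sum_{k=0}^{i-1}q_{ki}c_{k,i-1}\Big),$$ where $$Z_i=\Big(\sum_{k=0}^{i-1}o_{ki}\,q_{ki}\,c_{k,i-1}\Big)+o_{ii}\Big(1-\sum_{k=0}^{i-1}q_{ki}c_{k,i-1}\Big),$$ and $c_{00}=1$.
   Context: Model: Let $n\ge 1$ and fix observed data $y_1,\dots,y_n$. Let $(\mathbb X,\mathcal X)$, $(\mathbb Y,\mathcal Y)$ be standard Borel spaces, $\psi$ a $\sigma$-finite measure on $(\mathbb Y,\mathcal Y)$, $\mathcal J$ a probability measure on $(\mathbb X,\mathcal X)$, and $q_{ji}\in[0,1]$ for $0\le j<i\le n$. The model consists of random variables $C_i\in\{0,\dots,i\}$, $X_i\in\mathbb X$, $Y_i\in\mathbb Y$, $i=1,\dots,n$, with joint law factorizing as: $P(C_1=0)=q_{01}$, $P(C_1=1)=1-q_{01}$; for $i\ge2$, $C_i$ depends on the past only through $C_{i-1}$, with $P(C_i=j\mid C_{i-1}=j)=q_{ji}$ and $P(C_i=i\mid C_{i-1}=j)=1-q_{ji}$ ($0\le j\le i-1$); $X_1\sim\mathcal J$ independent of $C_1$; for $i\ge 2$, $X_i$ depends on the past only through $(C_i,X_{i-1})$, with $X_i\sim\mathcal J$ if $C_i=i$ and $X_i=X_{i-1}$ if $C_i<i$;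 $Y_i$ depends on all other variables only through $X_i$, with density $p(Y_i=y\mid X_i=x)$ w.r.t. $\psi$. Assume $\int\prod_{\ell=j}^i p(Y_\ell=y_\ell\mid X_\ell=x)\,\mathcal J(dx)>0$ for all $0<j\le i\le n$. $Y_{a:b}=y_{a:b}$ abbreviates $Y_a=y_a,\dots,Y_b=y_b$. Notation: $c_{ji}=P(C_i=j\mid Y_{1:i}=y_{1:i})$ for $0<i\le n$, $0\le j\le i$; $o_{ji}$ is the density $P(Y_i\in dy_i\mid C_i=j,Y_{j:i-1}=y_{j:i-1})/\psi(dy_i)$ evaluated at $y_i$ (for $j=0$ the conditioning is on $Y_{1:i-1}=y_{1:i-1}$, for $j=i$ only on $C_i=i$). *)

theory Defs
  imports "HOL-Probability.Probability"
begin

text \<open>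
  A path prefix is a list h of pairs (C_l, X_l), l = 1..length h,
  stored at position l - 1.  By convention C_0 = 0 (this matches P(C_1 = 0) = q_01).
  q j i is the parameter q_{ji}; J is the law of fresh segment values; p x y is the
  density p(Y = y | X = x) w.r.t. psi.
\<close>

definition Cof :: "(nat \<times> 'x) list \<Rightarrow> nat \<Rightarrow> nat" where
  "Cof h i = (if i = 0 then 0 else fst (h ! (i - 1)))"

definition Xof :: "(nat \<times> 'x) list \<Rightarrow> nat \<Rightarrow> 'x" where
  "Xof h l = snd (h ! (l - 1))"

text \<open>P(C_k = c | C_{k-1} = cp).\<close>
definition tprob :: "(nat \<Rightarrow> nat \<Rightarrow> real) \<Rightarrow> nat \<Rightarrow> nat \<Rightarrow> nat \<Rightarrow> real" where
  "tprob q k cp c = (if c = k then 1 - q cp k else if c = cp then q cp k else 0)"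

text \<open>Epath q J m h g: starting from the already generated prefix h (of length k-1),
  generate m further steps (C_k, X_k), ... of the model sequentially according to its
  factorisation, and integrate g over the resulting path.  Hence
  Epath q J i [] g is the expectation E[g((C_1,X_1),...,(C_i,X_i))] under the model.
  X_1 ~ J always; for k \<ge> 2, X_k ~ J if C_k = k and X_k = X_{k-1} otherwise.\<close>
fun Epath :: "(nat \<Rightarrow> nat \<Rightarrow> real) \<Rightarrow> 'x measure \<Rightarrow> nat \<Rightarrow> (nat \<times> 'x) list
               \<Rightarrow> ((nat \<times> 'x) list \<Rightarrow> ennreal) \<Rightarrow> ennreal" where
  "Epath q J 0 h g = g h"
| "Epath q J (Suc m) h g =
     (let k = Suc (length h); cp = (if h = [] then 0 else fst (last h)) in
      (\<Sum>c\<in>{cp, k}. ennreal (tprob q k cp c) *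
         (if c = k \<or> h = []
          then (\<integral>\<^sup>+ x. Epath q J m (h @ [(c, x)]) g \<partial>J)
          else Epath q J m (h @ [(c, snd (last h))]) g)))"

text \<open>Joint density (w.r.t. counting measure times psi^(b-a+1)) of
  (C_i = j, Y_a = y_a, ..., Y_b = y_b), for b \<le> i:
  E[ 1{C_i = j} * prod_{l=a..b} p(y_l | X_l) ].\<close>
definition jdens :: "(nat \<Rightarrow> nat \<Rightarrow> real) \<Rightarrow> 'x measure \<Rightarrow> ('x \<Rightarrow> 'y \<Rightarrow> real) \<Rightarrow> (nat \<Rightarrow> 'y)
                      \<Rightarrow> nat \<Rightarrow> nat \<Rightarrow> nat \<Rightarrow> nat \<Rightarrow> ennreal" where
  "jdens q J p y i j a b =
     Epath q J i [] (\<lambda>h. indicator {h'. Cof h' i = j} h *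
                         (\<Prod>l\<in>{a..b}. ennreal (p (Xof h l) (y l))))"

text \<open>Density of Y_{1:i} at y_{1:i}.\<close>
definition mdens :: "(nat \<Rightarrow> nat \<Rightarrow> real) \<Rightarrow> 'x measure \<Rightarrow> ('x \<Rightarrow> 'y \<Rightarrow> real) \<Rightarrow> (nat \<Rightarrow> 'y)
                      \<Rightarrow> nat \<Rightarrow> ennreal" where
  "mdens q J p y i = Epath q J i [] (\<lambda>h. \<Prod>l\<in>{1..i}. ennreal (p (Xof h l) (y l)))"

text \<open>c_{ji} = P(C_i = j | Y_{1:i} = y_{1:i}) (with c_00 = P(C_0 = 0) = 1).\<close>
definition cpost :: "(nat \<Rightarrow> nat \<Rightarrow> real) \<Rightarrow> 'x measure \<Rightarrow> ('x \<Rightarrow> 'y \<Rightarrow> real) \<Rightarrow> (nat \<Rightarrow> 'y)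
                      \<Rightarrow> nat \<Rightarrow> nat \<Rightarrow> real" where
  "cpost q J p y j i = enn2real (jdens q J p y i j 1 i) / enn2real (mdens q J p y i)"

text \<open>o_{ji}: density of Y_i at y_i given C_i = j and Y_{j:i-1} = y_{j:i-1}
  (Y_{1:i-1} for j = 0; only C_i = i for j = i).\<close>
definition opred :: "(nat \<Rightarrow> nat \<Rightarrow> real) \<Rightarrow> 'x measure \<Rightarrow> ('x \<Rightarrow> 'y \<Rightarrow> real) \<Rightarrow> (nat \<Rightarrow> 'y)
                      \<Rightarrow> nat \<Rightarrow> nat \<Rightarrow> real" where
  "opred q J p y j i =
     enn2real (jdens q J p y i j (max j 1) i) / enn2real (jdens q J p y i j (max j 1) (i - 1))"

end

theory Submission
  imports Defs
begin

(* Write a_{ji} for the joint density of C_i = j and y_{1:i}, and m_i for the density of y_{1:i},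
   so that c_{ji} = a_{ji} / m_i.  A segment draws its value from J when it starts and keeps it
   until the next changepoint, so a_{ji} factors into the joint density of a changepoint at j with
   y_{1:j-1}, the probability q_{j,j+1} ... q_{ji} that the segment survives up to i, and the
   J-integral of the likelihood of y_j, ..., y_i.  Applied to the densities defining o_{ji}, the same
   factorisation shows that o_{ji} is the ratio of the segment integrals up to i and up to i - 1.
   Hence a_{ji} = o_{ji} q_{ji} a_{j,i-1} for j < i and a_{ii} = o_{ii} b_i, where b_i is the joint
   density of a changepoint at i with y_{1:i-1}.  Conditioning on C_{i-1} gives
   m_{i-1} = sum_k q_{ki} a_{k,i-1} + b_i, and dividing by m_{i-1} yields the recursion with
   Z_i = m_i / m_{i-1}; that m_{i-1} > 0 follows by induction from the same identities. *)

(* The model in Markov form: from time k with C_k = c and X_k = x, run m further steps, multiply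
   in the weight w l X_l at every step l, and end with T C_{k+m} X_{k+m}.  At k = 0 the value x
   is never used, since X_1 is always drawn from J. *)
fun path_exp :: "(nat \<Rightarrow> nat \<Rightarrow> real) \<Rightarrow> 'x measure \<Rightarrow> (nat \<Rightarrow> 'x \<Rightarrow> ennreal)
    \<Rightarrow> (nat \<Rightarrow> 'x \<Rightarrow> ennreal) \<Rightarrow> nat \<Rightarrow> nat \<Rightarrow> nat \<Rightarrow> 'x \<Rightarrow> ennreal" where
  "path_exp q J w T 0 k c x = T c x"
| "path_exp q J w T (Suc m) k c x =
     (\<Sum>c'\<in>{c, Suc k}. ennreal (tprob q (Suc k) c c') *
        (if c' = Suc k \<or> k = 0 then (\<integral>\<^sup>+ x'. w (Suc k) x' * path_exp q J w T m (Suc k) c' x' \<partial>J)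
         else w (Suc k) x * path_exp q J w T m (Suc k) c' x))"

lemma path_exp_start_irrelevant:
  "path_exp q J w (\<lambda>c x. T c) m 0 c x = path_exp q J w (\<lambda>c x. T c) m 0 c x'"
  by (cases m) simp_all

lemma measurable_path_exp:
  assumes "\<And>l. w l \<in> borel_measurable J" "\<And>c. T c \<in> borel_measurable J"
  shows "(\<lambda>x. path_exp q J w T m k c x) \<in> borel_measurable J"
  using assms
proof (induction m arbitrary: k c)
  case 0
  then show ?case by simp
next
  case (Suc m)
  show ?case
    unfolding path_exp.simps
    by (intro borel_measurable_sum borel_measurable_times_ennreal) (use Suc in \<open>auto intro!: borel_measurable_times_ennreal\<close>)
qed

lemma measurable_weighted_path_exp:
  assumes "\<And>l. w l \<in> borel_measurable J" "\<And>c. T c \<in> borel_measurable J"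
  shows "(\<lambda>x. w l x * path_exp q J w T m k c x) \<in> borel_measurable J"
  by (intro borel_measurable_times_ennreal assms measurable_path_exp)

lemma path_exp_add_steps:
  "path_exp q J w T (m1 + m2) k c x = path_exp q J w (path_exp q J w T m2 (k + m1)) m1 k c x"
proof (induction m1 arbitrary: k c x)
  case (Suc m1)
  have "\<And>c x. path_exp q J w T (m1 + m2) (Suc k) c x
      = path_exp q J w (path_exp q J w T m2 (Suc (k + m1))) m1 (Suc k) c x"
    using Suc.IH[of "Suc k"] by simp
  then show ?case by (simp only: path_exp.simps add_Suc add_Suc_right)
qed simp

lemma path_exp_cong_terminal:
  "c \<le> k \<Longrightarrow> (\<And>c x. c \<le> k + m \<Longrightarrow> T c x = T' c x) \<Longrightarrow> path_exp q J w T m k c x = path_exp q J w T' m k c x"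
proof (induction m arbitrary: k c x)
  case (Suc m)
  have "\<And>c' x. c' \<in> {c, Suc k} \<Longrightarrow> path_exp q J w T m (Suc k) c' x = path_exp q J w T' m (Suc k) c' x"
    using Suc by (intro Suc.IH) auto
  then show ?case by (simp only: path_exp.simps) (intro sum.cong refl, simp only:)
qed simp

lemma path_exp_cong_weight:
  "(\<And>l. k < l \<Longrightarrow> l \<le> k + m \<Longrightarrow> w l = w' l) \<Longrightarrow> path_exp q J w T m k c x = path_exp q J w' T m k c x"
proof (induction m arbitrary: k c x)
  case (Suc m)
  have "\<And>c x. path_exp q J w T m (Suc k) c x = path_exp q J w' T m (Suc k) c x"
    using Suc by (intro Suc.IH) auto
  moreover have "w (Suc k) = w' (Suc k)" using Suc.prems by auto
  ultimately show ?case by (simp only: path_exp.simps)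
qed simp

lemma path_exp_mono_terminal:
  "c \<le> k \<Longrightarrow> (\<And>c x. c \<le> k + m \<Longrightarrow> T c x \<le> T' c x) \<Longrightarrow> path_exp q J w T m k c x \<le> path_exp q J w T' m k c x"
proof (induction m arbitrary: k c x)
  case (Suc m)
  have "\<And>c' x. c' \<in> {c, Suc k} \<Longrightarrow> path_exp q J w T m (Suc k) c' x \<le> path_exp q J w T' m (Suc k) c' x"
    using Suc by (intro Suc.IH) auto
  then show ?case
    by (simp only: path_exp.simps) (intro sum_mono mult_left_mono, auto intro!: mult_left_mono nn_integral_mono)
qed simp

lemma path_exp_cmult:
  assumes w: "\<And>l. w l \<in> borel_measurable J" and T: "\<And>c. T c \<in> borel_measurable J"
  shows "path_exp q J w (\<lambda>c x. K * T c x) m k c x = K * path_exp q J w T m k c x"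
proof (induction m arbitrary: k c x)
  case (Suc m)
  have "\<And>c. (\<integral>\<^sup>+ x. w (Suc k) x * (K * path_exp q J w T m (Suc k) c x) \<partial>J)
      = K * (\<integral>\<^sup>+ x. w (Suc k) x * path_exp q J w T m (Suc k) c x \<partial>J)"
    by (subst nn_integral_cmult[symmetric]) (auto intro!: measurable_weighted_path_exp w T simp: mult_ac)
  then show ?case
    by (simp only: path_exp.simps Suc.IH) (auto simp: sum_distrib_left mult_ac intro!: sum.cong)
qed simp

lemma path_exp_add:
  assumes w: "\<And>l. w l \<in> borel_measurable J"
    and T: "\<And>c. T c \<in> borel_measurable J" "\<And>c. T' c \<in> borel_measurable J"
  shows "path_exp q J w (\<lambda>c x. T c x + T' c x) m k c x = path_exp q J w T m k c x + path_exp q J w T' m k c x"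
proof (induction m arbitrary: k c x)
  case (Suc m)
  have "\<And>c. (\<integral>\<^sup>+ x. w (Suc k) x * (path_exp q J w T m (Suc k) c x + path_exp q J w T' m (Suc k) c x) \<partial>J)
      = (\<integral>\<^sup>+ x. w (Suc k) x * path_exp q J w T m (Suc k) c x \<partial>J)
        + (\<integral>\<^sup>+ x. w (Suc k) x * path_exp q J w T' m (Suc k) c x \<partial>J)"
    unfolding distrib_left by (rule nn_integral_add) (auto intro!: measurable_weighted_path_exp w T)
  then show ?case
    by (simp only: path_exp.simps Suc.IH) (auto simp: sum.distrib[symmetric] distrib_left intro!: sum.cong)
qed simp

lemma path_exp_sum:
  assumes w: "\<And>l. w l \<in> borel_measurable J"
    and T: "\<And>i c. i \<in> I \<Longrightarrow> T i c \<in> borel_measurable J" and "finite I"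
  shows "path_exp q J w (\<lambda>c x. \<Sum>i\<in>I. T i c x) m k c x = (\<Sum>i\<in>I. path_exp q J w (T i) m k c x)"
  using \<open>finite I\<close> T
proof (induction I rule: finite_induct)
  case empty
  show ?case by (induction m arbitrary: k c x) simp_all
next
  case (insert i I)
  then show ?case by (simp add: path_exp_add[OF w])
qed

lemma path_exp_eq_0_if_unweighted_eq_0:
  assumes w: "\<And>l. w l \<in> borel_measurable J" and T: "\<And>c. T c \<in> borel_measurable J"
  shows "path_exp q J (\<lambda>l x. 1) T m k c x = 0 \<Longrightarrow> path_exp q J w T m k c x = 0"
proof (induction m arbitrary: k c x)
  case 0
  then show ?case by simp
next
  case (Suc m)
  have "ennreal (tprob q (Suc k) c c') *
        (if c' = Suc k \<or> k = 0 then (\<integral>\<^sup>+ x. w (Suc k) x * path_exp q J w T m (Suc k) c' x \<partial>J)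
         else w (Suc k) x * path_exp q J w T m (Suc k) c' x) = 0"
    if c': "c' \<in> {c, Suc k}" for c'
  proof -
    have "ennreal (tprob q (Suc k) c c') *
        (if c' = Suc k \<or> k = 0 then (\<integral>\<^sup>+ x. 1 * path_exp q J (\<lambda>l x. 1) T m (Suc k) c' x \<partial>J)
         else 1 * path_exp q J (\<lambda>l x. 1) T m (Suc k) c' x) = 0"
      using Suc.prems c' unfolding path_exp.simps by (subst (asm) sum_eq_0_iff) auto
    then consider "ennreal (tprob q (Suc k) c c') = 0"
      | "c' = Suc k \<or> k = 0" "(\<integral>\<^sup>+ x. path_exp q J (\<lambda>l x. 1) T m (Suc k) c' x \<partial>J) = 0"
      | "\<not> (c' = Suc k \<or> k = 0)" "path_exp q J (\<lambda>l x. 1) T m (Suc k) c' x = 0"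
      by (auto split: if_splits)
    then show ?thesis
    proof cases
      case 2
      then have "AE x in J. path_exp q J (\<lambda>l x. 1) T m (Suc k) c' x = 0"
        by (subst (asm) nn_integral_0_iff_AE) (auto intro: measurable_path_exp T)
      then have "AE x in J. w (Suc k) x * path_exp q J w T m (Suc k) c' x = 0"
        by eventually_elim (simp add: Suc.IH)
      then have "(\<integral>\<^sup>+ x. w (Suc k) x * path_exp q J w T m (Suc k) c' x \<partial>J) = 0"
        by (subst nn_integral_0_iff_AE) (auto intro: measurable_weighted_path_exp w T)
      then show ?thesis using 2 by simp
    qed (auto simp: Suc.IH)
  qed
  then show ?case unfolding path_exp.simps by (intro sum.neutral) auto
qed

lemma path_exp_unit:
  assumes "prob_space J" and "\<And>j l. j < l \<Longrightarrow> l \<le> k + m \<Longrightarrow> 0 \<le> q j l \<and> q j l \<le> 1" and "c \<le> k"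
  shows "path_exp q J (\<lambda>l x. 1) (\<lambda>c x. 1) m k c x = 1"
  using assms(2,3)
proof (induction m arbitrary: k c x)
  case 0
  then show ?case by simp
next
  case (Suc m)
  have IH: "path_exp q J (\<lambda>l x. 1) (\<lambda>c x. 1) m (Suc k) c' = (\<lambda>x. 1)" if "c' \<in> {c, Suc k}" for c'
    using Suc.prems that by (intro ext Suc.IH) auto
  have "path_exp q J (\<lambda>l x. 1) (\<lambda>c x. 1) (Suc m) k c x = (\<Sum>c'\<in>{c, Suc k}. ennreal (tprob q (Suc k) c c'))"
    using IH prob_space.emeasure_space_1[OF assms(1)] by (auto intro!: sum.cong)
  also have "\<dots> = ennreal (q c (Suc k)) + ennreal (1 - q c (Suc k))"
    using Suc.prems(2) by (simp add: tprob_def)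
  also have "\<dots> = 1"
    using Suc.prems(1)[of c "Suc k"] Suc.prems(2) by (subst ennreal_plus[symmetric]) auto
  finally show ?case .
qed

lemma path_exp_indicator_left:
  "j \<le> k \<Longrightarrow> c \<noteq> j \<Longrightarrow> path_exp q J w (\<lambda>c x. indicator {j} c) m k c x = 0"
proof (induction m arbitrary: k c x)
  case (Suc m)
  then have "\<And>c' x. c' \<in> {c, Suc k} \<Longrightarrow> path_exp q J w (\<lambda>c x. indicator {j} c) m (Suc k) c' x = 0"
    by (intro Suc.IH) auto
  then show ?case by (subst path_exp.simps) (intro sum.neutral, auto)
qed simp

lemma path_exp_indicator_current:
  "j \<le> k \<Longrightarrow> 1 \<le> k \<Longrightarrow>
   path_exp q J w (\<lambda>c x. indicator {j} c) m k j x = (\<Prod>l\<in>{Suc k..k + m}. ennreal (q j l) * w l x)"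
proof (induction m arbitrary: k x)
  case (Suc m)
  have "path_exp q J w (\<lambda>c x. indicator {j} c) m (Suc k) (Suc k) x' = 0" for x'
    using Suc.prems by (intro path_exp_indicator_left) auto
  then have "path_exp q J w (\<lambda>c x. indicator {j} c) (Suc m) k j x
     = ennreal (q j (Suc k)) * (w (Suc k) x * (\<Prod>l\<in>{Suc (Suc k)..Suc k + m}. ennreal (q j l) * w l x))"
    using Suc by (simp add: tprob_def)
  also have "\<dots> = (\<Prod>l\<in>{Suc k..k + Suc m}. ennreal (q j l) * w l x)"
    by (subst prod.atLeast_Suc_atMost) (auto simp: mult_ac)
  finally show ?case .
qed simp

lemma mult_prod_interleave:
  fixes f g :: "nat \<Rightarrow> 'a::comm_monoid_mult"
  shows "f j * (\<Prod>l\<in>{Suc j..j + m}. g l * f l) = (\<Prod>l\<in>{Suc j..j + m}. g l) * (\<Prod>l\<in>{j..j + m}. f l)"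
  by (simp add: prod.atLeast_Suc_atMost[of j "j + m"] prod.distrib mult_ac)

(* The w-weighted probability that a new segment starts at time j: with unit weights this is
   P(C_j = j), with the likelihood weights of y_1, ..., y_{j-1} it is the joint density b_j. *)
definition change_weight :: "(nat \<Rightarrow> nat \<Rightarrow> real) \<Rightarrow> 'x measure \<Rightarrow> (nat \<Rightarrow> 'x \<Rightarrow> ennreal) \<Rightarrow> nat \<Rightarrow> ennreal" where
  "change_weight q J w j =
     (if j = 0 then 1 else path_exp q J w (\<lambda>c x. ennreal (1 - q c j)) (j - 1) 0 0 undefined)"

lemma path_exp_indicator_first_segment:
  assumes w: "\<And>l. w l \<in> borel_measurable J" and "1 \<le> N"
  shows "path_exp q J w (\<lambda>c x. indicator {0} c) N 0 0 x0 =
    (\<Prod>l\<in>{1..N}. ennreal (q 0 l)) * (\<integral>\<^sup>+ x. (\<Prod>l\<in>{1..N}. w l x) \<partial>J)"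
proof -
  obtain m where N: "N = 1 + m" using \<open>1 \<le> N\<close> by (metis le_add_diff_inverse)
  have "path_exp q J w (\<lambda>c x. indicator {0} c) m 1 1 x = 0" for x
    by (intro path_exp_indicator_left) auto
  then have "path_exp q J w (\<lambda>c x. indicator {0} c) N 0 0 x0
      = ennreal (q 0 1) * (\<integral>\<^sup>+ x. w 1 x * (\<Prod>l\<in>{Suc 1..1 + m}. ennreal (q 0 l) * w l x) \<partial>J)"
    unfolding N by (simp add: tprob_def path_exp_indicator_current)
  also have "\<dots> = ennreal (q 0 1) * (\<integral>\<^sup>+ x. (\<Prod>l\<in>{Suc 1..N}. ennreal (q 0 l)) * (\<Prod>l\<in>{1..N}. w l x) \<partial>J)"
    unfolding N by (simp only: mult_prod_interleave[of "\<lambda>l. w l x" 1 "\<lambda>l. ennreal (q 0 l)" m for x])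
  also have "\<dots> = ennreal (q 0 1) * ((\<Prod>l\<in>{Suc 1..N}. ennreal (q 0 l)) * (\<integral>\<^sup>+ x. (\<Prod>l\<in>{1..N}. w l x) \<partial>J))"
    using w by (subst nn_integral_cmult) auto
  also have "\<dots> = (\<Prod>l\<in>{1..N}. ennreal (q 0 l)) * (\<integral>\<^sup>+ x. (\<Prod>l\<in>{1..N}. w l x) \<partial>J)"
    using \<open>1 \<le> N\<close> by (simp only: prod.atLeast_Suc_atMost[of 1 N] mult.assoc)
  finally show ?thesis .
qed

lemma path_exp_indicator_enter:
  assumes w: "\<And>l. w l \<in> borel_measurable J" and "c < j"
  shows "path_exp q J w (\<lambda>c x. indicator {j} c) (Suc m) (j - 1) c x =
    ennreal (1 - q c j) * ((\<Prod>l\<in>{Suc j..j + m}. ennreal (q j l)) * (\<integral>\<^sup>+ x. (\<Prod>l\<in>{j..j + m}. w l x) \<partial>J))"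
proof -
  obtain k where k: "j = Suc k" using \<open>c < j\<close> by (cases j) auto
  have "path_exp q J w (\<lambda>c x. indicator {j} c) m j c x' = 0" for x'
    using \<open>c < j\<close> by (intro path_exp_indicator_left) auto
  then have "path_exp q J w (\<lambda>c x. indicator {j} c) (Suc m) (j - 1) c x
     = ennreal (1 - q c j) * (\<integral>\<^sup>+ x. w j x * path_exp q J w (\<lambda>c x. indicator {j} c) m j j x \<partial>J)"
    using \<open>c < j\<close> unfolding k by (cases k) (simp_all add: tprob_def)
  also have "\<dots> = ennreal (1 - q c j) * (\<integral>\<^sup>+ x. w j x * (\<Prod>l\<in>{Suc j..j + m}. ennreal (q j l) * w l x) \<partial>J)"
    using k by (simp add: path_exp_indicator_current)
  also have "\<dots> = ennreal (1 - q c j) *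
      (\<integral>\<^sup>+ x. (\<Prod>l\<in>{Suc j..j + m}. ennreal (q j l)) * (\<Prod>l\<in>{j..j + m}. w l x) \<partial>J)"
    by (simp only: mult_prod_interleave[of "\<lambda>l. w l x" j "\<lambda>l. ennreal (q j l)" m for x])
  also have "\<dots> = ennreal (1 - q c j) * ((\<Prod>l\<in>{Suc j..j + m}. ennreal (q j l)) * (\<integral>\<^sup>+ x. (\<Prod>l\<in>{j..j + m}. w l x) \<partial>J))"
    using w by (subst nn_integral_cmult) auto
  finally show ?thesis .
qed

lemma path_exp_indicator_later_segment:
  assumes w: "\<And>l. w l \<in> borel_measurable J" and "1 \<le> j" "j \<le> N"
  shows "path_exp q J w (\<lambda>c x. indicator {j} c) N 0 0 x0 =
    change_weight q J w j * ((\<Prod>l\<in>{Suc j..N}. ennreal (q j l)) * (\<integral>\<^sup>+ x. (\<Prod>l\<in>{j..N}. w l x) \<partial>J))"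
proof -
  define m where "m = N - j"
  have N: "N = (j - 1) + Suc m" and jm: "N = j + m"
    using assms(2,3) by (simp_all add: m_def)
  define K where "K = (\<Prod>l\<in>{Suc j..N}. ennreal (q j l)) * (\<integral>\<^sup>+ x. (\<Prod>l\<in>{j..N}. w l x) \<partial>J)"
  have "path_exp q J w (\<lambda>c x. indicator {j} c) N 0 0 x0
      = path_exp q J w (path_exp q J w (\<lambda>c x. indicator {j} c) (Suc m) (0 + (j - 1))) (j - 1) 0 0 x0"
    unfolding N by (rule path_exp_add_steps)
  also have "\<dots> = path_exp q J w (\<lambda>c x. K * ennreal (1 - q c j)) (j - 1) 0 0 x0"
  proof (rule path_exp_cong_terminal)
    fix c x assume "c \<le> 0 + (j - 1)"
    then have "c < j" using assms(2) by simp
    have "path_exp q J w (\<lambda>c x. indicator {j} c) (Suc m) (j - 1) c x = ennreal (1 - q c j) * K"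
      unfolding K_def jm by (rule path_exp_indicator_enter[OF w \<open>c < j\<close>])
    then show "path_exp q J w (\<lambda>c x. indicator {j} c) (Suc m) (0 + (j - 1)) c x = K * ennreal (1 - q c j)"
      by (simp only: add_0 mult.commute)
  qed simp
  also have "\<dots> = K * change_weight q J w j"
    using assms(2) w
    by (simp add: path_exp_cmult change_weight_def path_exp_start_irrelevant[where x = x0 and x' = undefined])
  finally show ?thesis by (simp add: K_def mult.commute)
qed

lemma path_exp_indicator_factor:
  assumes "prob_space J" and w: "\<And>l. w l \<in> borel_measurable J" and "j \<le> N"
  shows "path_exp q J w (\<lambda>c x. indicator {j} c) N 0 0 x0 =
    change_weight q J w j * ((\<Prod>l\<in>{Suc j..N}. ennreal (q j l)) * (\<integral>\<^sup>+ x. (\<Prod>l\<in>{max j 1..N}. w l x) \<partial>J))"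
proof (cases "j = 0")
  case True
  show ?thesis
  proof (cases "N = 0")
    case True
    then show ?thesis
      using \<open>j = 0\<close> prob_space.emeasure_space_1[OF assms(1)] by (simp add: change_weight_def)
  next
    case False
    then show ?thesis
      using \<open>j = 0\<close> path_exp_indicator_first_segment[OF w] by (simp add: change_weight_def)
  qed
next
  case False
  then show ?thesis using path_exp_indicator_later_segment[OF w] assms(3) by simp
qed

lemma change_weight_cong:
  "(\<And>l. 1 \<le> l \<Longrightarrow> l < j \<Longrightarrow> w l = w' l) \<Longrightarrow> change_weight q J w j = change_weight q J w' j"
  unfolding change_weight_def by (auto intro!: path_exp_cong_weight)

lemma change_weight_eq_0_if_unweighted_eq_0:
  "change_weight q J (\<lambda>l x. 1) j = 0 \<Longrightarrow> (\<And>l. w l \<in> borel_measurable J) \<Longrightarrow> change_weight q J w j = 0"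
  unfolding change_weight_def by (cases "j = 0") (auto intro: path_exp_eq_0_if_unweighted_eq_0)

definition window_lik :: "('x \<Rightarrow> 'y \<Rightarrow> real) \<Rightarrow> (nat \<Rightarrow> 'y) \<Rightarrow> nat \<Rightarrow> nat \<Rightarrow> nat \<Rightarrow> 'x \<Rightarrow> ennreal" where
  "window_lik p y a b l x = (if a \<le> l \<and> l \<le> b then ennreal (p x (y l)) else 1)"

lemma prod_window_lik:
  "a \<le> c \<Longrightarrow> (\<Prod>l\<in>{c..N}. window_lik p y a b l x) = (\<Prod>l\<in>{c..min N b}. ennreal (p x (y l)))"
  by (rule prod.mono_neutral_cong_right) (auto simp: window_lik_def)

lemma Cof_length: "Cof h (length h) = (if h = [] then 0 else fst (last h))"
  by (cases h rule: rev_cases) (simp_all add: Cof_def)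

lemma prod_lik_snoc:
  assumes "1 \<le> a"
  shows "(\<Prod>l\<in>{a..min b (Suc (length h))}. ennreal (p (Xof (h @ [(c, x)]) l) (y l)))
    = (\<Prod>l\<in>{a..min b (length h)}. ennreal (p (Xof h l) (y l))) * window_lik p y a b (Suc (length h)) x"
proof -
  have old: "(\<Prod>l\<in>{a..min b (length h)}. ennreal (p (Xof (h @ [(c, x)]) l) (y l)))
     = (\<Prod>l\<in>{a..min b (length h)}. ennreal (p (Xof h l) (y l)))"
    using assms by (intro prod.cong refl) (auto simp: Xof_def nth_append)
  have new: "Xof (h @ [(c, x)]) (Suc (length h)) = x" by (simp add: Xof_def)
  show ?thesis
  proof (cases "a \<le> Suc (length h) \<and> Suc (length h) \<le> b")
    case True
    then have m1: "min b (Suc (length h)) = Suc (length h)" and m2: "min b (length h) = length h"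
      by auto
    have "(\<Prod>l\<in>{a..Suc (length h)}. ennreal (p (Xof (h @ [(c, x)]) l) (y l)))
      = ennreal (p (Xof (h @ [(c, x)]) (Suc (length h))) (y (Suc (length h)))) *
        (\<Prod>l\<in>{a..length h}. ennreal (p (Xof (h @ [(c, x)]) l) (y l)))"
      by (rule prod.nat_ivl_Suc') (use True in auto)
    then show ?thesis using True old new unfolding m1 m2 by (simp add: window_lik_def mult_ac)
  next
    case False
    then have same: "{a..min b (Suc (length h))} = {a..min b (length h)}" by auto
    have "window_lik p y a b (Suc (length h)) x = 1" using False by (auto simp: window_lik_def)
    then show ?thesis unfolding same old by simp
  qed
qed

lemma Epath_eq_path_exp:
  assumes w: "\<And>l. window_lik p y a b l \<in> borel_measurable J" and "1 \<le> a" "b \<le> i"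
    and "length h + m = i"
  shows "Epath q J m h (\<lambda>h'. T (Cof h' i) * (\<Prod>l\<in>{a..b}. ennreal (p (Xof h' l) (y l))))
    = (\<Prod>l\<in>{a..min b (length h)}. ennreal (p (Xof h l) (y l))) *
      path_exp q J (window_lik p y a b) (\<lambda>c x. T c) m (length h) (Cof h (length h)) (snd (last h))"
  using assms(4)
proof (induction m arbitrary: h)
  case 0
  then show ?case using \<open>b \<le> i\<close> by (simp add: min_absorb1 mult.commute)
next
  case (Suc m)
  define g where "g = (\<lambda>h'. T (Cof h' i) * (\<Prod>l\<in>{a..b}. ennreal (p (Xof h' l) (y l))))"
  define P where "P = (\<Prod>l\<in>{a..min b (length h)}. ennreal (p (Xof h l) (y l)))"
  define k where "k = length h"
  define G where "G = path_exp q J (window_lik p y a b) (\<lambda>c x. T c) m (Suc k)"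
  have snoc: "Epath q J m (h @ [(c, x)]) g = P * (window_lik p y a b (Suc k) x * G c x)" for c x
  proof -
    have "Epath q J m (h @ [(c, x)]) g
      = (\<Prod>l\<in>{a..min b (Suc (length h))}. ennreal (p (Xof (h @ [(c, x)]) l) (y l))) *
        path_exp q J (window_lik p y a b) (\<lambda>c x. T c) m (Suc (length h)) c x"
      using Suc.IH[of "h @ [(c, x)]"] Suc.prems by (simp add: g_def Cof_def)
    then show ?thesis
      unfolding prod_lik_snoc[OF \<open>1 \<le> a\<close>] by (simp add: P_def G_def k_def mult_ac)
  qed
  have "(\<lambda>x. window_lik p y a b (Suc k) x * G c x) \<in> borel_measurable J" for c
    unfolding G_def by (intro measurable_weighted_path_exp w) simp
  then have step: "(if c = Suc k \<or> h = [] then (\<integral>\<^sup>+ x. Epath q J m (h @ [(c, x)]) g \<partial>J)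
        else Epath q J m (h @ [(c, snd (last h))]) g)
      = P * (if c = Suc k \<or> k = 0 then (\<integral>\<^sup>+ x. window_lik p y a b (Suc k) x * G c x \<partial>J)
        else window_lik p y a b (Suc k) (snd (last h)) * G c (snd (last h)))" for c
    unfolding snoc by (auto simp: nn_integral_cmult k_def)
  have "Epath q J (Suc m) h g = (\<Sum>c\<in>{Cof h k, Suc k}. ennreal (tprob q (Suc k) (Cof h k) c) *
        (if c = Suc k \<or> h = [] then (\<integral>\<^sup>+ x. Epath q J m (h @ [(c, x)]) g \<partial>J)
         else Epath q J m (h @ [(c, snd (last h))]) g))"
    by (simp add: Let_def Cof_length k_def)
  also have "\<dots> = P * path_exp q J (window_lik p y a b) (\<lambda>c x. T c) (Suc m) k (Cof h k) (snd (last h))"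
    unfolding step path_exp.simps G_def sum_distrib_left by (simp add: mult_ac)
  finally show ?case by (simp add: g_def P_def k_def)
qed

definition stay_prob :: "(nat \<Rightarrow> nat \<Rightarrow> real) \<Rightarrow> nat \<Rightarrow> nat \<Rightarrow> real" where
  "stay_prob q j N = (\<Prod>l\<in>{Suc j..N}. q j l)"

lemma stay_prob_step: "j < i \<Longrightarrow> stay_prob q j i = q j i * stay_prob q j (i - 1)"
  unfolding stay_prob_def by (cases i) (simp_all add: prod.nat_ivl_Suc')

lemma ratio_mult_cancel:
  fixes d a u v :: real
  assumes "d = 0 \<Longrightarrow> a = 0" and "v \<noteq> 0"
  shows "(d * u) / (d * v) * (a * v) = a * u"
  using assms by (cases "d = 0") simp_all

lemma normalised_recursion:
  fixes a a' ob r :: "nat \<Rightarrow> real" and B m m' :: real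
  assumes "m' \<noteq> 0"
    and continue: "\<And>j. j < i \<Longrightarrow> ob j * r j * a' j = a j"
    and new: "ob i * B = a i"
    and prev: "m' = (\<Sum>k<i. r k * a' k) + B"
    and total: "m = (\<Sum>j<i. a j) + a i"
  defines "Z \<equiv> (\<Sum>k<i. ob k * r k * (a' k / m')) + ob i * (1 - (\<Sum>k<i. r k * (a' k / m')))"
  shows "\<forall>j<i. a j / m = ob j / Z * r j * (a' j / m')"
    and "a i / m = ob i / Z * (1 - (\<Sum>k<i. r k * (a' k / m')))"
proof -
  have B: "1 - (\<Sum>k<i. r k * (a' k / m')) = B / m'"
    using prev \<open>m' \<noteq> 0\<close> by (simp add: sum_divide_distrib[symmetric] field_simps)
  have "Z * m' = (\<Sum>k<i. ob k * r k * a' k) + ob i * B"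
    unfolding Z_def B using \<open>m' \<noteq> 0\<close> by (simp add: sum_distrib_right distrib_right)
  also have "\<dots> = m"
    using continue new total by simp
  finally have Zm: "Z * m' = m" .
  show "\<forall>j<i. a j / m = ob j / Z * r j * (a' j / m')"
    using continue by (simp flip: Zm)
  show "a i / m = ob i / Z * (1 - (\<Sum>k<i. r k * (a' k / m')))"
    unfolding B using new by (simp flip: Zm)
qed

locale changepoint_model =
  fixes J :: "'x measure" and \<psi> :: "'y measure"
    and p :: "'x \<Rightarrow> 'y \<Rightarrow> real" and q :: "nat \<Rightarrow> nat \<Rightarrow> real"
    and y :: "nat \<Rightarrow> 'y" and n :: nat
  assumes prob_space_J: "prob_space J"
    and q_range: "\<And>j i. j < i \<Longrightarrow> i \<le> n \<Longrightarrow> 0 \<le> q j i \<and> q j i \<le> 1"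
    and p_measurable: "(\<lambda>(x, v). p x v) \<in> borel_measurable (J \<Otimes>\<^sub>M \<psi>)"
    and y_in_space: "\<And>l. 1 \<le> l \<Longrightarrow> l \<le> n \<Longrightarrow> y l \<in> space \<psi>"
    and seg_integral_pos: "\<And>j i. 0 < j \<Longrightarrow> j \<le> i \<Longrightarrow> i \<le> n \<Longrightarrow>
           0 < (\<integral>\<^sup>+ x. (\<Prod>l\<in>{j..i}. ennreal (p x (y l))) \<partial>J)"
    and seg_integral_finite: "\<And>j i. 0 < j \<Longrightarrow> j \<le> i \<Longrightarrow> i \<le> n \<Longrightarrow>
           (\<integral>\<^sup>+ x. (\<Prod>l\<in>{j..i}. ennreal (p x (y l))) \<partial>J) < \<infinity>"
begin

sublocale J: prob_space J
  by (rule prob_space_J)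

definition seg_lik :: "nat \<Rightarrow> nat \<Rightarrow> ennreal" where
  "seg_lik a b = (\<integral>\<^sup>+ x. (\<Prod>l\<in>{a..b}. ennreal (p x (y l))) \<partial>J)"

(* In the notation of the header, joint N j = a_{jN}, marginal N = m_N and new_segment i = b_i. *)
abbreviation joint :: "nat \<Rightarrow> nat \<Rightarrow> real" where
  "joint N j \<equiv> enn2real (jdens q J p y N j 1 N)"

abbreviation marginal :: "nat \<Rightarrow> real" where
  "marginal N \<equiv> enn2real (mdens q J p y N)"

abbreviation new_segment :: "nat \<Rightarrow> real" where
  "new_segment i \<equiv> enn2real (change_weight q J (window_lik p y 1 (i - 1)) i)"

lemma window_lik_measurable: "1 \<le> a \<Longrightarrow> b \<le> n \<Longrightarrow> window_lik p y a b l \<in> borel_measurable J"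
proof (cases "a \<le> l \<and> l \<le> b")
  case True
  assume "1 \<le> a" "b \<le> n"
  with True have "(\<lambda>x. p x (y l)) \<in> borel_measurable J"
    using measurable_comp[OF measurable_Pair2'[OF y_in_space] p_measurable] by (simp add: comp_def)
  then show ?thesis using True unfolding window_lik_def by simp
next
  case False
  then have "window_lik p y a b l = (\<lambda>x. 1)" by (auto simp: window_lik_def)
  then show ?thesis by simp
qed

lemma seg_lik_pos_finite: "1 \<le> a \<Longrightarrow> b \<le> n \<Longrightarrow> 0 < seg_lik a b \<and> seg_lik a b < \<top>"
  unfolding seg_lik_def
  by (cases "a \<le> b") (use seg_integral_pos[of a b] seg_integral_finite[of a b] in \<open>auto simp: J.emeasure_space_1\<close>)

lemma enn2real_seg_lik_pos: "1 \<le> a \<Longrightarrow> b \<le> n \<Longrightarrow> 0 < enn2real (seg_lik a b)"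
  using seg_lik_pos_finite by (simp add: enn2real_positive_iff)

lemma stay_prob_nonneg: "N \<le> n \<Longrightarrow> 0 \<le> stay_prob q j N"
  unfolding stay_prob_def using q_range by (intro prod_nonneg) auto

lemma jdens_eq_path_exp:
  assumes "1 \<le> a" "b \<le> N" "N \<le> n"
  shows "jdens q J p y N j a b = path_exp q J (window_lik p y a b) (\<lambda>c x. indicator {j} c) N 0 0 undefined"
proof -
  have "jdens q J p y N j a b
      = Epath q J N [] (\<lambda>h. indicator {j} (Cof h N) * (\<Prod>l\<in>{a..b}. ennreal (p (Xof h l) (y l))))"
    unfolding jdens_def by (simp add: indicator_def)
  also have "\<dots> = path_exp q J (window_lik p y a b) (\<lambda>c x. indicator {j} c) N 0 0 (snd (last ([] :: (nat \<times> 'x) list)))"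
    using assms by (subst Epath_eq_path_exp) (auto intro: window_lik_measurable simp: Cof_def)
  finally show ?thesis by (rule trans) (rule path_exp_start_irrelevant)
qed

lemma mdens_eq_path_exp:
  assumes "N \<le> n"
  shows "mdens q J p y N = path_exp q J (window_lik p y 1 N) (\<lambda>c x. 1) N 0 0 undefined"
proof -
  have "mdens q J p y N = Epath q J N [] (\<lambda>h. 1 * (\<Prod>l\<in>{1..N}. ennreal (p (Xof h l) (y l))))"
    unfolding mdens_def by simp
  also have "\<dots> = path_exp q J (window_lik p y 1 N) (\<lambda>c x. 1) N 0 0 (snd (last ([] :: (nat \<times> 'x) list)))"
    using assms by (subst Epath_eq_path_exp) (auto intro: window_lik_measurable simp: Cof_def)
  finally show ?thesis by (rule trans) (rule path_exp_start_irrelevant)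
qed

lemma jdens_factor:
  assumes "1 \<le> a" "a \<le> max j 1" "j \<le> N" "b \<le> N" "N \<le> n"
  shows "jdens q J p y N j a b =
    change_weight q J (window_lik p y a b) j * (ennreal (stay_prob q j N) * seg_lik (max j 1) b)"
proof -
  have "(\<Prod>l\<in>{Suc j..N}. ennreal (q j l)) = ennreal (stay_prob q j N)"
    unfolding stay_prob_def using assms q_range by (intro prod_ennreal) auto
  moreover have "(\<integral>\<^sup>+ x. (\<Prod>l\<in>{max j 1..N}. window_lik p y a b l x) \<partial>J) = seg_lik (max j 1) b"
    unfolding seg_lik_def using assms by (simp add: prod_window_lik min_absorb2)
  ultimately show ?thesis
    using assms by (simp add: jdens_eq_path_exp path_exp_indicator_factor window_lik_measurable prob_space_J)
qed

lemma enn2real_jdens_factor: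
  assumes "1 \<le> a" "a \<le> max j 1" "j \<le> N" "b \<le> N" "N \<le> n"
  shows "enn2real (jdens q J p y N j a b) =
    enn2real (change_weight q J (window_lik p y a b) j) * (stay_prob q j N * enn2real (seg_lik (max j 1) b))"
  using assms stay_prob_nonneg[of N j] by (simp add: jdens_factor enn2real_mult)

lemma mdens_eq_sum_jdens:
  assumes "N \<le> n"
  shows "mdens q J p y N = (\<Sum>j\<le>N. jdens q J p y N j 1 N)"
proof -
  have w: "\<And>l. window_lik p y 1 N l \<in> borel_measurable J"
    using assms by (intro window_lik_measurable) auto
  have "mdens q J p y N = path_exp q J (window_lik p y 1 N) (\<lambda>c x. \<Sum>j\<le>N. indicator {j} c) N 0 0 undefined"
    unfolding mdens_eq_path_exp[OF assms] by (rule path_exp_cong_terminal) (auto simp: indicator_def)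
  also have "\<dots> = (\<Sum>j\<le>N. path_exp q J (window_lik p y 1 N) (\<lambda>c x. indicator {j} c) N 0 0 undefined)"
    by (rule path_exp_sum[OF w]) auto
  also have "\<dots> = (\<Sum>j\<le>N. jdens q J p y N j 1 N)"
    using assms by (simp add: jdens_eq_path_exp)
  finally show ?thesis .
qed

lemma mdens_prev_eq:
  assumes "1 \<le> i" "i \<le> n"
  shows "mdens q J p y (i - 1) = (\<Sum>k<i. ennreal (q k i) * jdens q J p y (i - 1) k 1 (i - 1))
    + change_weight q J (window_lik p y 1 (i - 1)) i"
proof -
  let ?G = "\<lambda>T. path_exp q J (window_lik p y 1 (i - 1)) T (i - 1) 0 0 undefined"
  have w: "\<And>l. window_lik p y 1 (i - 1) l \<in> borel_measurable J"
    using assms by (intro window_lik_measurable) auto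
  have "ennreal (q k i) * jdens q J p y (i - 1) k 1 (i - 1) = ?G (\<lambda>c x. ennreal (q k i) * indicator {k} c)" for k
    using assms path_exp_cmult[where T = "\<lambda>c x. indicator {k} c", OF w borel_measurable_const]
    by (simp add: jdens_eq_path_exp)
  then have "(\<Sum>k<i. ennreal (q k i) * jdens q J p y (i - 1) k 1 (i - 1))
      = (\<Sum>k<i. ?G (\<lambda>c x. ennreal (q k i) * indicator {k} c))"
    by simp
  also have "\<dots> = ?G (\<lambda>c x. \<Sum>k<i. ennreal (q k i) * indicator {k} c)"
    by (rule path_exp_sum[OF w, symmetric]) auto
  finally have "(\<Sum>k<i. ennreal (q k i) * jdens q J p y (i - 1) k 1 (i - 1)) + change_weight q J (window_lik p y 1 (i - 1)) i
      = ?G (\<lambda>c x. \<Sum>k<i. ennreal (q k i) * indicator {k} c) + ?G (\<lambda>c x. ennreal (1 - q c i))"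
    using assms by (simp add: change_weight_def)
  also have "\<dots> = ?G (\<lambda>c x. (\<Sum>k<i. ennreal (q k i) * indicator {k} c) + ennreal (1 - q c i))"
    by (rule path_exp_add[OF w, symmetric]) auto
  also have "\<dots> = ?G (\<lambda>c x. 1)"
  proof (rule path_exp_cong_terminal)
    fix c x assume "c \<le> 0 + (i - 1)"
    then have "c < i" using assms by auto
    then have "(\<Sum>k<i. ennreal (q k i) * indicator {k} c) = ennreal (q c i)"
      by (simp add: indicator_def sum.delta' if_distrib cong: if_cong)
    then have "(\<Sum>k<i. ennreal (q k i) * indicator {k} c) + ennreal (1 - q c i)
        = ennreal (q c i) + ennreal (1 - q c i)"
      by simp
    also have "\<dots> = 1"
      using q_range[OF \<open>c < i\<close> assms(2)] by (subst ennreal_plus[symmetric]) auto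
    finally show "(\<Sum>k<i. ennreal (q k i) * indicator {k} c) + ennreal (1 - q c i) = 1" .
  qed simp
  also have "\<dots> = mdens q J p y (i - 1)"
    using assms by (simp add: mdens_eq_path_exp)
  finally show ?thesis ..
qed

lemma change_weight_le_mdens:
  assumes "1 \<le> j" "j \<le> Suc N" "N \<le> n" "j \<le> n"
  shows "change_weight q J (window_lik p y 1 N) j \<le> mdens q J p y (j - 1)"
proof -
  have "change_weight q J (window_lik p y 1 N) j
      = path_exp q J (window_lik p y 1 N) (\<lambda>c x. ennreal (1 - q c j)) (j - 1) 0 0 undefined"
    using assms by (simp add: change_weight_def)
  also have "\<dots> \<le> path_exp q J (window_lik p y 1 N) (\<lambda>c x. 1) (j - 1) 0 0 undefined"
    using assms q_range by (intro path_exp_mono_terminal) auto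
  also have "\<dots> = path_exp q J (window_lik p y 1 (j - 1)) (\<lambda>c x. 1) (j - 1) 0 0 undefined"
    using assms by (intro path_exp_cong_weight) (auto simp: window_lik_def fun_eq_iff)
  also have "\<dots> = mdens q J p y (j - 1)"
    using assms by (simp add: mdens_eq_path_exp)
  finally show ?thesis .
qed

lemma mdens_finite: "N \<le> n \<Longrightarrow> mdens q J p y N < \<top>"
proof (induction N rule: less_induct)
  case (less N)
  have "jdens q J p y N j 1 N < \<top>" if "j \<le> N" for j
  proof -
    have "change_weight q J (window_lik p y 1 N) j < \<top>"
    proof (cases "j = 0")
      case False
      then have "change_weight q J (window_lik p y 1 N) j \<le> mdens q J p y (j - 1)"
        using that less.prems by (intro change_weight_le_mdens) auto
      also have "\<dots> < \<top>"
        using less.IH False that less.prems by auto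
      finally show ?thesis .
    qed (simp add: change_weight_def)
    moreover have "seg_lik (max j 1) N < \<top>"
      using seg_lik_pos_finite less.prems by auto
    ultimately show ?thesis
      using that less.prems by (simp add: jdens_factor ennreal_mult_less_top)
  qed
  then show ?case
    using less.prems by (simp add: mdens_eq_sum_jdens)
qed

lemma jdens_finite: "j \<le> N \<Longrightarrow> N \<le> n \<Longrightarrow> jdens q J p y N j 1 N < \<top>"
  using mdens_finite[of N] by (simp add: mdens_eq_sum_jdens)

lemma change_weight_finite:
  assumes "1 \<le> j" "j \<le> n"
  shows "change_weight q J (window_lik p y 1 (j - 1)) j < \<top>"
proof -
  have "change_weight q J (window_lik p y 1 (j - 1)) j \<le> mdens q J p y (j - 1)"
    using assms by (intro change_weight_le_mdens) auto
  also have "\<dots> < \<top>"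
    using assms by (intro mdens_finite) auto
  finally show ?thesis .
qed

lemma change_prob_le_1: "j \<le> n \<Longrightarrow> change_weight q J (\<lambda>l x. 1) j \<le> 1"
proof (cases "j = 0")
  case False
  assume "j \<le> n"
  have "path_exp q J (\<lambda>l x. 1) (\<lambda>c x. ennreal (1 - q c j)) (j - 1) 0 0 undefined
      \<le> path_exp q J (\<lambda>l x. 1) (\<lambda>c x. 1) (j - 1) 0 0 undefined"
    using q_range False \<open>j \<le> n\<close> by (intro path_exp_mono_terminal) auto
  also have "\<dots> = 1"
    using q_range \<open>j \<le> n\<close> by (intro path_exp_unit prob_space_J) auto
  finally show ?thesis using False by (simp add: change_weight_def)
qed (simp add: change_weight_def)

lemma enn2real_change_weight_eq_0:
  assumes "j \<le> n" "N \<le> n" "enn2real (change_weight q J (\<lambda>l x. 1) j) = 0"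
  shows "enn2real (change_weight q J (window_lik p y 1 N) j) = 0"
proof -
  have "change_weight q J (\<lambda>l x. 1) j = 0"
    using assms(3) change_prob_le_1[OF assms(1)] by (auto simp: enn2real_eq_0_iff top_unique)
  then have "change_weight q J (window_lik p y 1 N) j = 0"
    by (rule change_weight_eq_0_if_unweighted_eq_0) (use assms(2) in \<open>auto intro: window_lik_measurable\<close>)
  then show ?thesis by simp
qed

lemma joint_continue:
  assumes "1 \<le> i" "i \<le> n" "j < i"
  shows "opred q J p y j i * q j i * joint (i - 1) j = joint i j"
    and "0 < q j i * joint (i - 1) j \<Longrightarrow> 0 < joint i j"
proof -
  define bA where "bA = enn2real (change_weight q J (window_lik p y 1 (i - 1)) j)"
  define bD where "bD = enn2real (change_weight q J (\<lambda>l x. 1) j)"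
  define s where "s = stay_prob q j i"
  define Ip where "Ip = enn2real (seg_lik (max j 1) i)"
  define Im where "Im = enn2real (seg_lik (max j 1) (i - 1))"
  have "change_weight q J (window_lik p y 1 i) j = change_weight q J (window_lik p y 1 (i - 1)) j"
    using assms by (intro change_weight_cong) (auto simp: window_lik_def fun_eq_iff)
  then have now: "joint i j = bA * s * Ip"
    using assms by (simp add: enn2real_jdens_factor bA_def s_def Ip_def)
  have before: "q j i * joint (i - 1) j = bA * s * Im"
    using assms by (simp add: enn2real_jdens_factor bA_def s_def Im_def stay_prob_step)
  have "change_weight q J (window_lik p y (max j 1) b) j = change_weight q J (\<lambda>l x. 1) j" for b
    by (intro change_weight_cong) (auto simp: window_lik_def fun_eq_iff)
  then have opred: "opred q J p y j i = (bD * s * Ip) / (bD * s * Im)"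
    using assms unfolding opred_def by (simp add: enn2real_jdens_factor bD_def s_def Ip_def Im_def mult.assoc)
  have "0 < Ip" "0 < Im"
    using assms enn2real_seg_lik_pos by (auto simp: Ip_def Im_def)
  \<comment> \<open>In the degenerate case opred is 0 / 0 = 0, and both sides vanish.\<close>
  have "bD = 0 \<Longrightarrow> bA = 0"
    using assms enn2real_change_weight_eq_0[of j "i - 1"] by (simp add: bA_def bD_def)
  then have "bD * s = 0 \<Longrightarrow> bA * s = 0" by auto
  then have "opred q J p y j i * (bA * s * Im) = bA * s * Ip"
    unfolding opred using ratio_mult_cancel[of "bD * s" "bA * s" Im Ip] \<open>0 < Im\<close> by simp
  then show "opred q J p y j i * q j i * joint (i - 1) j = joint i j"
    using before now by (simp add: mult.assoc)
  show "0 < q j i * joint (i - 1) j \<Longrightarrow> 0 < joint i j"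
    unfolding before now using \<open>0 < Ip\<close> \<open>0 < Im\<close> by (simp add: zero_less_mult_iff)
qed

lemma joint_new_segment:
  assumes "1 \<le> i" "i \<le> n"
  shows "opred q J p y i i * new_segment i = joint i i"
    and "0 < new_segment i \<Longrightarrow> 0 < joint i i"
proof -
  define bD where "bD = enn2real (change_weight q J (\<lambda>l x. 1) i)"
  define I where "I = enn2real (seg_lik i i)"
  have "change_weight q J (window_lik p y 1 i) i = change_weight q J (window_lik p y 1 (i - 1)) i"
    by (intro change_weight_cong) (auto simp: window_lik_def fun_eq_iff)
  then have now: "joint i i = new_segment i * I"
    using assms by (simp add: enn2real_jdens_factor I_def stay_prob_def max_absorb1)
  have "change_weight q J (window_lik p y i b) i = change_weight q J (\<lambda>l x. 1) i" for b
    by (intro change_weight_cong) (auto simp: window_lik_def fun_eq_iff)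
  moreover have "enn2real (seg_lik i (i - 1)) = 1"
    using assms by (simp add: seg_lik_def J.emeasure_space_1)
  ultimately have opred: "opred q J p y i i = (bD * I) / (bD * 1)"
    using assms unfolding opred_def by (simp add: enn2real_jdens_factor bD_def I_def stay_prob_def max_absorb1)
  have "0 < I"
    using assms enn2real_seg_lik_pos by (simp add: I_def)
  have "bD = 0 \<Longrightarrow> new_segment i = 0"
    using assms enn2real_change_weight_eq_0[of i "i - 1"] by (simp add: bD_def)
  then show "opred q J p y i i * new_segment i = joint i i"
    unfolding now opred using ratio_mult_cancel[of bD "new_segment i" I 1] by simp
  show "0 < new_segment i \<Longrightarrow> 0 < joint i i"
    unfolding now using \<open>0 < I\<close> by simp
qed

lemma marginal_prev_eq:
  assumes "1 \<le> i" "i \<le> n"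
  shows "marginal (i - 1) = (\<Sum>k<i. q k i * joint (i - 1) k) + new_segment i"
proof -
  have finite: "ennreal (q k i) * jdens q J p y (i - 1) k 1 (i - 1) < \<top>" if "k < i" for k
    using that assms jdens_finite[of k "i - 1"] by (simp add: ennreal_mult_less_top)
  then have "(\<Sum>k<i. ennreal (q k i) * jdens q J p y (i - 1) k 1 (i - 1)) < \<top>"
    by simp
  then have "marginal (i - 1) = enn2real (\<Sum>k<i. ennreal (q k i) * jdens q J p y (i - 1) k 1 (i - 1)) + new_segment i"
    unfolding mdens_prev_eq[OF assms] by (rule enn2real_plus[OF _ change_weight_finite[OF assms]])
  also have "enn2real (\<Sum>k<i. ennreal (q k i) * jdens q J p y (i - 1) k 1 (i - 1))
      = (\<Sum>k<i. enn2real (ennreal (q k i) * jdens q J p y (i - 1) k 1 (i - 1)))"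
    using enn2real_sum[of "{..<i}" "\<lambda>k. ennreal (q k i) * jdens q J p y (i - 1) k 1 (i - 1)"] finite
    by (simp add: o_def)
  also have "\<dots> = (\<Sum>k<i. q k i * joint (i - 1) k)"
    using assms q_range by (intro sum.cong refl) (simp add: enn2real_mult)
  finally show ?thesis .
qed

lemma marginal_eq_sum_joint:
  assumes "N \<le> n"
  shows "marginal N = (\<Sum>j\<le>N. joint N j)"
proof -
  have "marginal N = sum (enn2real \<circ> (\<lambda>j. jdens q J p y N j 1 N)) {..N}"
    unfolding mdens_eq_sum_jdens[OF assms] using jdens_finite assms by (intro enn2real_sum) auto
  then show ?thesis by (simp add: o_def)
qed

lemma marginal_pos: "N \<le> n \<Longrightarrow> 0 < marginal N"
proof (induction N)
  case 0
  then show ?case by (simp add: mdens_def)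
next
  case (Suc N)
  have i: "1 \<le> Suc N" "Suc N \<le> n" using Suc.prems by auto
  have "\<exists>j\<le>Suc N. 0 < joint (Suc N) j"
  proof (cases "0 < new_segment (Suc N)")
    case True
    then show ?thesis using joint_new_segment(2)[OF i] by auto
  next
    case False
    then have pos: "0 < (\<Sum>k<Suc N. q k (Suc N) * joint N k)"
      using marginal_prev_eq[OF i] Suc by simp
    have "\<exists>k<Suc N. 0 < q k (Suc N) * joint N k"
    proof (rule ccontr)
      assume "\<not> ?thesis"
      then have "q k (Suc N) * joint N k \<le> 0" if "k < Suc N" for k
        using that not_less by blast
      then have "(\<Sum>k<Suc N. q k (Suc N) * joint N k) \<le> 0"
        by (intro sum_nonpos) simp
      with pos show False by simp
    qed
    then obtain k where "k < Suc N" "0 < q k (Suc N) * joint N k"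
      by blast
    then show ?thesis
      using joint_continue(2)[OF i] by (intro exI[of _ k]) simp
  qed
  then obtain j where "j \<le> Suc N" "0 < joint (Suc N) j" by blast
  moreover have "joint (Suc N) j \<le> marginal (Suc N)"
    unfolding marginal_eq_sum_joint[OF i(2)] using \<open>j \<le> Suc N\<close> by (intro member_le_sum) auto
  ultimately show ?case by linarith
qed

lemma cpost_recursion:
  assumes "1 \<le> i" "i \<le> n"
  defines "Z \<equiv> (\<Sum>k<i. opred q J p y k i * q k i * cpost q J p y k (i - 1))
    + opred q J p y i i * (1 - (\<Sum>k<i. q k i * cpost q J p y k (i - 1)))"
  shows "j < i \<Longrightarrow> cpost q J p y j i = opred q J p y j i / Z * q j i * cpost q J p y j (i - 1)"
    and "cpost q J p y i i = opred q J p y i i / Z * (1 - (\<Sum>k<i. q k i * cpost q J p y k (i - 1)))"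
proof -
  have "0 < marginal (i - 1)"
    using assms by (intro marginal_pos) simp
  then have "marginal (i - 1) \<noteq> 0"
    by simp
  moreover have "marginal i = (\<Sum>j<i. joint i j) + joint i i"
    using assms by (simp add: marginal_eq_sum_joint lessThan_Suc_atMost[symmetric])
  ultimately have recursion:
    "\<forall>j<i. joint i j / marginal i = opred q J p y j i / Z * q j i * (joint (i - 1) j / marginal (i - 1))"
    "joint i i / marginal i = opred q J p y i i / Z * (1 - (\<Sum>k<i. q k i * (joint (i - 1) k / marginal (i - 1))))"
    unfolding Z_def cpost_def
    using normalised_recursion[where ob = "\<lambda>j. opred q J p y j i" and r = "\<lambda>k. q k i",
        OF _ joint_continue(1)[OF assms(1,2)] joint_new_segment(1)[OF assms(1,2)] marginal_prev_eq[OF assms(1,2)]]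
    by blast+
  then show "j < i \<Longrightarrow> cpost q J p y j i = opred q J p y j i / Z * q j i * cpost q J p y j (i - 1)"
    and "cpost q J p y i i = opred q J p y i i / Z * (1 - (\<Sum>k<i. q k i * cpost q J p y k (i - 1)))"
    unfolding cpost_def by simp_all
qed

end

theorem mainTheorem2:
  fixes J :: "'x measure" and \<psi> :: "'y measure"
    and p :: "'x \<Rightarrow> 'y \<Rightarrow> real" and q :: "nat \<Rightarrow> nat \<Rightarrow> real"
    and y :: "nat \<Rightarrow> 'y" and n :: nat
  assumes "n \<ge> 1"
    and "prob_space J"
    and "sigma_finite_measure \<psi>"
    and "\<And>j i. j < i \<Longrightarrow> i \<le> n \<Longrightarrow> 0 \<le> q j i \<and> q j i \<le> 1"
    and "\<And>x v. 0 \<le> p x v"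
    and "(\<lambda>(x, v). p x v) \<in> borel_measurable (J \<Otimes>\<^sub>M \<psi>)"
    and "\<And>x. x \<in> space J \<Longrightarrow> (\<integral>\<^sup>+ v. ennreal (p x v) \<partial>\<psi>) = 1"
    and "\<And>l. 1 \<le> l \<Longrightarrow> l \<le> n \<Longrightarrow> y l \<in> space \<psi>"
    and "\<And>j i. 0 < j \<Longrightarrow> j \<le> i \<Longrightarrow> i \<le> n \<Longrightarrow>
           0 < (\<integral>\<^sup>+ x. (\<Prod>l\<in>{j..i}. ennreal (p x (y l))) \<partial>J)"
    and "\<And>j i. 0 < j \<Longrightarrow> j \<le> i \<Longrightarrow> i \<le> n \<Longrightarrow>
           (\<integral>\<^sup>+ x. (\<Prod>l\<in>{j..i}. ennreal (p x (y l))) \<partial>J) < \<infinity>"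
  shows "cpost q J p y 0 0 = 1 \<and>
    (\<forall>i\<in>{1..n}.
      (let c = cpost q J p y; ob = opred q J p y;
           Z = (\<Sum>k<i. ob k i * q k i * c k (i - 1)) + ob i i * (1 - (\<Sum>k<i. q k i * c k (i - 1)))
       in (\<forall>j<i. c j i = ob j i / Z * q j i * c j (i - 1)) \<and>
          c i i = ob i i / Z * (1 - (\<Sum>k<i. q k i * c k (i - 1)))))"
proof -
  interpret changepoint_model J \<psi> p q y n
    by (rule changepoint_model.intro[OF assms(2,4,6,8,9,10)])
  show ?thesis
    unfolding Let_def
  proof (intro conjI ballI allI impI)
    show "cpost q J p y 0 0 = 1"
      by (simp add: cpost_def jdens_def mdens_def Cof_def)
  qed (rule cpost_recursion; auto)+
qed

end
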